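(* There is an absolute constant $c>0$ such that for every integer $k\ge 2$, every strict subdivision of a graph of average degree at least $c\,k\log k$ contains, as an induced subgraph, a disjoint union of $k$ cycles (i.e., it is not $\mathcal{O}_k$-free).
   Context: All graphs are finite and simple. A strict subdivision of a graph $H$ is a graph obtained from $H$ by replacing each edge by a path with at least two edges (each edge is subdivided at least once), the new paths being internally disjoint. A graph $G$ is $\mathcal{O}_k$-free if it has no induced subgraph isomorphic to a disjoint union of $k$ cycles. *)

theory Defs
  imports Complex_Main
begin

definition simple_graph :: "'a set \<Rightarrow> 'a set set \<Rightarrow> bool" where
  "simple_graph V E \<longleftrightarrow> finite V \<and>
     (\<forall>e\<in>E. \<exists>u v. u \<noteq> v \<and> e = {u, v} \<and> u \<in> V \<and> v \<in> V)"

definition avg_degree :: "'a set \<Rightarrow> 'a set set \<Rightarrow> real" where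
  "avg_degree V E = 2 * real (card E) / real (card V)"

definition path_edges :: "'a list \<Rightarrow> 'a set set" where
  "path_edges p = {{p ! i, p ! Suc i} | i. Suc i < length p}"

definition interior :: "'a list \<Rightarrow> 'a set" where
  "interior p = set (butlast (tl p))"

definition strict_subdivision ::
  "'b set \<Rightarrow> 'b set set \<Rightarrow> 'a set \<Rightarrow> 'a set set \<Rightarrow> bool" where
  "strict_subdivision VG EG VH EH \<longleftrightarrow>
     (\<exists>f P. inj_on f VH \<and>
        (\<forall>e\<in>EH. distinct (P e) \<and> length (P e) \<ge> 3 \<and>
                 {hd (P e), last (P e)} = f ` e \<and>
                 interior (P e) \<inter> f ` VH = {}) \<and>
        (\<forall>e\<in>EH. \<forall>e'\<in>EH. e \<noteq> e' \<longrightarrow> interior (P e) \<inter> interior (P e') = {}) \<and>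
        VG = f ` VH \<union> (\<Union>e\<in>EH. interior (P e)) \<and>
        EG = (\<Union>e\<in>EH. path_edges (P e)))"

definition induced_cycle :: "'a set \<Rightarrow> 'a set set \<Rightarrow> 'a list \<Rightarrow> bool" where
  "induced_cycle V E c \<longleftrightarrow> distinct c \<and> length c \<ge> 3 \<and> set c \<subseteq> V \<and>
     {e \<in> E. e \<subseteq> set c} =
       {{c ! i, c ! (Suc i mod length c)} | i. i < length c}"

definition has_induced_k_cycles :: "nat \<Rightarrow> 'a set \<Rightarrow> 'a set set \<Rightarrow> bool" where
  "has_induced_k_cycles k V E \<longleftrightarrow>
     (\<exists>C :: nat \<Rightarrow> 'a list.
        (\<forall>i<k. induced_cycle V E (C i)) \<and>
        (\<forall>i<k. \<forall>j<k. i \<noteq> j \<longrightarrow>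
            set (C i) \<inter> set (C j) = {} \<and>
            (\<forall>u\<in>set (C i). \<forall>v\<in>set (C j). {u, v} \<notin> E)))"

definition O_free :: "nat \<Rightarrow> 'a set \<Rightarrow> 'a set set \<Rightarrow> bool" where
  "O_free k V E \<longleftrightarrow> \<not> has_induced_k_cycles k V E"

end

theory Submission
  imports Defs
begin

text \<open>An average degree of \<open>(6 / ln 2) k log k\<close> is at least \<open>6k\<close>, and linear density already
  suffices. If \<open>H[W]\<close> has at least \<open>3k|W|\<close> edges, then peeling vertices of degree at most one
  leaves a subgraph of minimum degree two, so \<open>H[W]\<close> has a cycle. A shortest cycle \<open>C\<close> of
  \<open>H[W]\<close> is induced, and every other vertex of \<open>W\<close> has at most three neighbours on it, so
  deleting \<open>V(C)\<close> costs at most \<open>3|W|\<close> edges and leaves density \<open>3(k - 1)\<close>. The subdivided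
  copy of \<open>C\<close> contains an induced cycle of \<open>G\<close>; since every subdivision path has an interior
  vertex, the parts of \<open>G\<close> spanned by disjoint vertex sets of \<open>H\<close> are disjoint and
  non-adjacent, and induction on \<open>k\<close> yields \<open>k\<close> induced cycles far apart.\<close>

definition doubleton_edges :: "'a set set \<Rightarrow> bool" where
  "doubleton_edges E \<longleftrightarrow> (\<forall>e\<in>E. \<exists>u v. u \<noteq> v \<and> e = {u, v})"

abbreviation edges_in :: "'a set set \<Rightarrow> 'a set \<Rightarrow> 'a set set" where
  "edges_in E W \<equiv> {e \<in> E. e \<subseteq> W}"

definition min_degree_2_on :: "'a set set \<Rightarrow> 'a set \<Rightarrow> bool" where
  "min_degree_2_on E T \<longleftrightarrow> (\<forall>x\<in>T. \<exists>y\<in>T. \<exists>z\<in>T. y \<noteq> z \<and> {x, y} \<in> E \<and> {x, z} \<in> E)"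

definition is_cycle :: "'a set set \<Rightarrow> 'a list \<Rightarrow> bool" where
  "is_cycle E c \<longleftrightarrow> distinct c \<and> 3 \<le> length c \<and> path_edges c \<subseteq> E \<and> {last c, hd c} \<in> E"

definition segment :: "'a list \<Rightarrow> nat \<Rightarrow> nat \<Rightarrow> 'a list" where
  "segment p a b = take (Suc b - a) (drop a p)"

lemma doubleton_edges_singleton: "doubleton_edges E \<Longrightarrow> {x} \<notin> E"
  unfolding doubleton_edges_def by (metis doubleton_eq_iff insert_absorb2)

lemma doubleton_edgesE:
  assumes "doubleton_edges E" "e \<in> E"
  obtains u v where "u \<noteq> v" "e = {u, v}"
  using assms unfolding doubleton_edges_def by blast

lemma finite_edges_in: "finite W \<Longrightarrow> finite (edges_in E W)"
  by (rule finite_subset[of _ "Pow W"]) auto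

lemma path_edges_subset_iff:
  "path_edges p \<subseteq> E \<longleftrightarrow> (\<forall>i. Suc i < length p \<longrightarrow> {p ! i, p ! Suc i} \<in> E)"
  unfolding path_edges_def by blast

lemma path_edge_subset_set: "e \<in> path_edges p \<Longrightarrow> e \<subseteq> set p"
  unfolding path_edges_def by auto

lemma path_edges_Cons:
  assumes "p \<noteq> []"
  shows "path_edges (x # p) = insert {x, hd p} (path_edges p)"
proof (intro equalityI subsetI)
  fix e assume "e \<in> path_edges (x # p)"
  then obtain i where "Suc i < length (x # p)" "e = {(x # p) ! i, (x # p) ! Suc i}"
    unfolding path_edges_def by blast
  then show "e \<in> insert {x, hd p} (path_edges p)"
    using assms by (cases i) (auto simp: path_edges_def hd_conv_nth)
next
  fix e assume "e \<in> insert {x, hd p} (path_edges p)"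
  then consider "e = {x, hd p}" | i where "Suc i < length p" "e = {p ! i, p ! Suc i}"
    unfolding path_edges_def by blast
  then show "e \<in> path_edges (x # p)"
  proof cases
    case 1
    then show ?thesis
      using assms unfolding path_edges_def by (auto simp: hd_conv_nth intro!: exI[of _ 0])
  next
    case (2 i)
    then have "e = {(x # p) ! Suc i, (x # p) ! Suc (Suc i)}" "Suc (Suc i) < length (x # p)"
      by simp_all
    then show ?thesis unfolding path_edges_def by blast
  qed
qed

lemma path_edges_take: "path_edges (take n p) \<subseteq> path_edges p"
  unfolding path_edges_def by auto

lemma path_edges_drop: "path_edges (drop n p) \<subseteq> path_edges p"
proof
  fix e assume "e \<in> path_edges (drop n p)"
  then obtain i where "Suc i < length (drop n p)" "e = {drop n p ! i, drop n p ! Suc i}"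
    unfolding path_edges_def by blast
  then have "Suc (n + i) < length p" "e = {p ! (n + i), p ! Suc (n + i)}" by auto
  then show "e \<in> path_edges p" unfolding path_edges_def by blast
qed

lemma cycle_edges_conv:
  assumes "c \<noteq> []"
  shows "{{c ! i, c ! (Suc i mod length c)} | i. i < length c} =
    insert {last c, hd c} (path_edges c)" (is "?C = _")
proof -
  define n where "n = length c"
  have "?C = {{c ! i, c ! Suc i} | i. Suc i < n} \<union> {{c ! (n - 1), c ! 0}}"
  proof (intro equalityI subsetI)
    fix e assume "e \<in> ?C"
    then obtain i where i: "i < n" "e = {c ! i, c ! (Suc i mod n)}" unfolding n_def by blast
    show "e \<in> {{c ! i, c ! Suc i} | i. Suc i < n} \<union> {{c ! (n - 1), c ! 0}}"
    proof (cases "Suc i < n")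
      case True then show ?thesis using i by auto
    next
      case False then have "i = n - 1" "Suc i = n" using i by auto
      then have "Suc i mod n = 0" by simp
      then show ?thesis using i \<open>i = n - 1\<close> by auto
    qed
  next
    fix e assume "e \<in> {{c ! i, c ! Suc i} | i. Suc i < n} \<union> {{c ! (n - 1), c ! 0}}"
    then consider i where "Suc i < n" "e = {c ! i, c ! Suc i}" | "e = {c ! (n - 1), c ! 0}"
      by blast
    then show "e \<in> ?C"
    proof cases
      case (1 i)
      then have "e = {c ! i, c ! (Suc i mod n)}" by simp
      then show ?thesis using 1 unfolding n_def by force
    next
      case 2
      moreover have "n - 1 < n" "Suc (n - 1) mod n = 0" using assms by (simp_all add: n_def)
      ultimately show ?thesis unfolding n_def by (metis (mono_tags, lifting) mem_Collect_eq)
    qed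
  qed
  then show ?thesis
    using assms by (auto simp: n_def path_edges_def last_conv_nth hd_conv_nth insert_commute)
qed

lemma
  assumes "a \<le> b" "b < length p"
  shows length_segment: "length (segment p a b) = Suc b - a"
    and hd_segment: "hd (segment p a b) = p ! a"
    and last_segment: "last (segment p a b) = p ! b"
proof -
  show l: "length (segment p a b) = Suc b - a" using assms by (simp add: segment_def)
  then show "hd (segment p a b) = p ! a" using assms by (simp add: hd_conv_nth segment_def)
  show "last (segment p a b) = p ! b"
    using assms l by (simp add: last_conv_nth segment_def del: length_take length_drop)
qed

lemma distinct_segment: "distinct p \<Longrightarrow> distinct (segment p a b)"
  by (simp add: segment_def)

lemma set_segment: "set (segment p a b) \<subseteq> set p"
  unfolding segment_def by (meson order.trans set_drop_subset set_take_subset)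

lemma path_edges_segment: "path_edges (segment p a b) \<subseteq> path_edges p"
  unfolding segment_def using path_edges_take path_edges_drop by blast

lemma is_cycle_min_degree_2:
  assumes "is_cycle E c"
  shows "min_degree_2_on E (set c)"
  unfolding min_degree_2_on_def
proof
  define n where "n = length c"
  have c: "distinct c" "3 \<le> n" and edge: "\<And>i. Suc i < n \<Longrightarrow> {c ! i, c ! Suc i} \<in> E"
    using assms by (auto simp: is_cycle_def n_def path_edges_subset_iff)
  then have "c \<noteq> []" by (auto simp: n_def)
  then have close: "{c ! (n - 1), c ! 0} \<in> E"
    using assms by (simp add: is_cycle_def n_def hd_conv_nth last_conv_nth)
  have neq: "c ! i \<noteq> c ! j" if "i < n" "j < n" "i \<noteq> j" for i j
    using c(1) that by (simp add: n_def nth_eq_iff_index_eq)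
  fix x assume "x \<in> set c"
  then obtain i where i: "i < n" "x = c ! i" by (auto simp: n_def in_set_conv_nth)
  consider "i = 0" | "0 < i" "Suc i < n" | "i = n - 1"
    using i by linarith
  then show "\<exists>y\<in>set c. \<exists>z\<in>set c. y \<noteq> z \<and> {x, y} \<in> E \<and> {x, z} \<in> E"
  proof cases
    case 1
    have "c ! 1 \<noteq> c ! (n - 1)" using c by (intro neq) auto
    moreover have "c ! 1 \<in> set c" "c ! (n - 1) \<in> set c" using c by (simp_all add: n_def)
    moreover have "{x, c ! 1} \<in> E" "{x, c ! (n - 1)} \<in> E"
      using c close edge[of 0] i 1 by (simp_all add: insert_commute)
    ultimately show ?thesis by blast
  next
    case 2
    have "c ! (i - 1) \<noteq> c ! Suc i" using 2 by (intro neq) auto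
    moreover have "c ! (i - 1) \<in> set c" "c ! Suc i \<in> set c" using 2 by (simp_all add: n_def)
    moreover have "{x, c ! (i - 1)} \<in> E" "{x, c ! Suc i} \<in> E"
      using edge[of i] edge[of "i - 1"] i 2 by (simp_all add: insert_commute)
    ultimately show ?thesis by blast
  next
    case 3
    have "c ! (n - 2) \<noteq> c ! 0" using c by (intro neq) auto
    moreover have "c ! (n - 2) \<in> set c" "c ! 0 \<in> set c"
      using c \<open>c \<noteq> []\<close> by (simp_all add: n_def)
    moreover have "{x, c ! (n - 2)} \<in> E" "{x, c ! 0} \<in> E"
      using c close edge[of "n - 2"] i 3
      by (simp_all add: insert_commute numeral_2_eq_2 Suc_diff_Suc)
    ultimately show ?thesis by blast
  qed
qed

lemma induced_cycle_is_cycle: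
  assumes "induced_cycle V E c"
  shows "is_cycle E c"
proof -
  have "c \<noteq> []" using assms by (auto simp: induced_cycle_def)
  then show ?thesis using assms unfolding induced_cycle_def is_cycle_def
    by (auto simp: cycle_edges_conv)
qed

lemma induced_cycleI:
  assumes "is_cycle E c" "set c \<subseteq> V"
    and "edges_in E (set c) \<subseteq> insert {last c, hd c} (path_edges c)"
  shows "induced_cycle V E c"
proof -
  have "c \<noteq> []" using assms(1) by (auto simp: is_cycle_def)
  moreover have "{last c, hd c} \<subseteq> set c" using calculation by simp
  then show ?thesis
    using assms path_edge_subset_set
    unfolding induced_cycle_def is_cycle_def cycle_edges_conv[OF \<open>c \<noteq> []\<close>] by blast
qed

lemma card_edges_in_induced_cycle:
  assumes "induced_cycle V E c"
  shows "card (edges_in E (set c)) \<le> card (set c)"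
proof -
  have "edges_in E (set c) = {{c ! i, c ! (Suc i mod length c)} | i. i < length c}"
    using assms by (simp add: induced_cycle_def)
  also have "\<dots> = (\<lambda>i. {c ! i, c ! (Suc i mod length c)}) ` {..<length c}"
    by (simp add: setcompr_eq_image lessThan_def)
  finally have "card (edges_in E (set c)) \<le> card {..<length c}"
    by (simp only: card_image_le finite_lessThan)
  then show ?thesis using assms by (simp add: induced_cycle_def distinct_card)
qed

lemma min_degree_2_has_cycle:
  assumes E: "doubleton_edges E" and T: "finite T" "T \<noteq> {}" "min_degree_2_on E T"
  shows "\<exists>c. is_cycle E c \<and> set c \<subseteq> T"
proof -
  define is_path where "is_path p \<longleftrightarrow> distinct p \<and> set p \<subseteq> T \<and> path_edges p \<subseteq> E" for p
  obtain t where "t \<in> T" using T by blast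
  then have "is_path [t]" by (simp add: is_path_def path_edges_def)
  moreover have "length p < Suc (card T)" if "is_path p" for p
    using that T(1) by (metis is_path_def card_mono distinct_card less_Suc_eq_le)
  ultimately obtain p where p: "is_path p" and longest: "\<And>q. is_path q \<Longrightarrow> length q \<le> length p"
    using ex_has_greatest_nat[of is_path "[t]" length] by metis
  have "p \<noteq> []" using longest[OF \<open>is_path [t]\<close>] by auto
  have pE: "path_edges p \<subseteq> E" and "distinct p" and pT: "set p \<subseteq> T"
    using p by (auto simp: is_path_def)
  \<comment> \<open>both neighbours of the head of a longest path lie on it; the farther one closes a cycle\<close>
  have nbr_on_path: "y \<in> set p" if "y \<in> T" "{hd p, y} \<in> E" for y
  proof (rule ccontr)
    assume "y \<notin> set p"
    then have "is_path (y # p)"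
      using p that \<open>p \<noteq> []\<close> by (auto simp: is_path_def path_edges_Cons insert_commute)
    then show False using longest[of "y # p"] by simp
  qed
  obtain y z where yz: "y \<in> T" "z \<in> T" "y \<noteq> z" "{hd p, y} \<in> E" "{hd p, z} \<in> E"
    using T(3) pT \<open>p \<noteq> []\<close> unfolding min_degree_2_on_def by (meson hd_in_set subsetD)
  obtain a b where ab: "a < length p" "b < length p" "y = p ! a" "z = p ! b"
    using nbr_on_path yz by (metis in_set_conv_nth)
  have "v \<noteq> hd p" if "{hd p, v} \<in> E" for v
    using that doubleton_edges_singleton[OF E] by fastforce
  then have "y \<noteq> p ! 0" "z \<noteq> p ! 0" using yz \<open>p \<noteq> []\<close> by (simp_all add: hd_conv_nth)
  then have "a \<noteq> 0" "b \<noteq> 0" using ab by metis+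
  moreover have "a \<noteq> b" using ab yz by auto
  ultimately obtain j where j: "2 \<le> j" "j < length p" "{hd p, p ! j} \<in> E"
    using ab yz by (metis One_nat_def less_2_cases_iff not_le)
  define c where "c = take (Suc j) p"
  have "hd c = hd p" "last c = p ! j" "length c = Suc j"
    using j \<open>p \<noteq> []\<close> by (simp_all add: c_def last_conv_nth hd_conv_nth)
  then have "is_cycle E c"
    using j pE path_edges_take \<open>distinct p\<close> by (auto simp: is_cycle_def c_def insert_commute)
  moreover have "set c \<subseteq> T" using pT set_take_subset unfolding c_def by fast
  ultimately show ?thesis by blast
qed

lemma shortest_cycle_chordless:
  assumes E: "doubleton_edges E" and c: "is_cycle E c" "set c \<subseteq> U"
    and shortest: "\<And>c'. is_cycle E c' \<Longrightarrow> set c' \<subseteq> U \<Longrightarrow> length c \<le> length c'"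
  shows "edges_in E (set c) \<subseteq> insert {last c, hd c} (path_edges c)"
proof -
  define n where "n = length c"
  have "distinct c" "3 \<le> n" "path_edges c \<subseteq> E" using c by (auto simp: is_cycle_def n_def)
  then have "c \<noteq> []" by (auto simp: n_def)
  have chord: "{c ! a, c ! b} \<in> insert {last c, hd c} (path_edges c)"
    if ab: "a < b" "b < n" "{c ! a, c ! b} \<in> E" for a b
  proof (cases "b = Suc a \<or> (a = 0 \<and> b = n - 1)")
    case True
    then consider "b = Suc a" | "a = 0" "b = n - 1" by blast
    then show ?thesis
    proof cases
      case 1
      then show ?thesis using ab unfolding path_edges_def n_def by blast
    next
      case 2
      then show ?thesis using \<open>c \<noteq> []\<close> by (simp add: n_def hd_conv_nth last_conv_nth insert_commute)
    qed
  next
    case False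
    define s where "s = segment c a b"
    have "length s = Suc b - a" "hd s = c ! a" "last s = c ! b"
      using ab by (simp_all add: s_def n_def length_segment hd_segment last_segment)
    moreover have "3 \<le> Suc b - a" using False ab by linarith
    moreover have "distinct s" "path_edges s \<subseteq> E"
      using \<open>distinct c\<close> \<open>path_edges c \<subseteq> E\<close> path_edges_segment[of c a b]
      by (auto simp: s_def distinct_segment)
    ultimately have "is_cycle E s" using ab(3) by (simp add: is_cycle_def insert_commute)
    moreover have "set s \<subseteq> U" using c set_segment unfolding s_def by fast
    ultimately have "n \<le> Suc b - a" using shortest[of s] \<open>length s = Suc b - a\<close> by (simp add: n_def)
    then show ?thesis using False ab by linarith
  qed
  show ?thesis
  proof
    fix e assume e: "e \<in> edges_in E (set c)"
    then obtain u v where uv: "u \<noteq> v" "e = {u, v}"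
      using doubleton_edgesE[OF E] by blast
    then have "u \<in> set c" "v \<in> set c" using e by auto
    obtain a where a: "a < n" "u = c ! a" using \<open>u \<in> set c\<close> by (auto simp: n_def in_set_conv_nth)
    obtain b where b: "b < n" "v = c ! b" using \<open>v \<in> set c\<close> by (auto simp: n_def in_set_conv_nth)
    have "e \<in> E" "a \<noteq> b" using e uv a b by auto
    show "e \<in> insert {last c, hd c} (path_edges c)"
    proof (cases "a < b")
      case True
      then show ?thesis using chord[of a b] \<open>e \<in> E\<close> a b uv by simp
    next
      case False
      then have "b < a" "e = {c ! b, c ! a}" using \<open>a \<noteq> b\<close> a b uv by (auto simp: insert_commute)
      then show ?thesis using chord[of b a] \<open>e \<in> E\<close> a by simp
    qed
  qed
qed

lemma shortest_cycle_few_neighbours: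
  assumes c: "is_cycle E c" "set c \<subseteq> U" and w: "w \<in> U - set c"
    and shortest: "\<And>c'. is_cycle E c' \<Longrightarrow> set c' \<subseteq> U \<Longrightarrow> length c \<le> length c'"
  shows "card {y \<in> set c. {w, y} \<in> E} \<le> 3"
proof -
  define n where "n = length c"
  define N where "N = {i. i < n \<and> {w, c ! i} \<in> E}"
  have "distinct c" "path_edges c \<subseteq> E" using c by (auto simp: is_cycle_def)
  have "finite N" by (simp add: N_def)
  have gap: "n \<le> b - a + 2" if "a \<in> N" "b \<in> N" "a < b" for a b
  proof -
    \<comment> \<open>\<open>w\<close> followed by the arc of \<open>c\<close> from \<open>c ! a\<close> to \<open>c ! b\<close> is a cycle in \<open>U\<close>\<close>
    define s where "s = segment c a b"
    have s: "length s = Suc b - a" "hd s = c ! a" "last s = c ! b"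
      using that by (simp_all add: s_def N_def n_def length_segment hd_segment last_segment)
    then have "is_cycle E (w # s)"
      using that w \<open>distinct c\<close> \<open>path_edges c \<subseteq> E\<close>
        path_edges_segment[of c a b] set_segment[of c a b]
      by (auto simp: is_cycle_def s_def N_def distinct_segment path_edges_Cons insert_commute)
    moreover have "set (w # s) \<subseteq> U" using c w set_segment unfolding s_def by fastforce
    ultimately show ?thesis using shortest s(1) that(3) unfolding n_def by fastforce
  qed
  have "card N \<le> 3"
  proof (rule ccontr)
    assume "\<not> card N \<le> 3"
    define a where "a = Min N"
    define d where "d = Max N"
    have "card {a, d} \<le> 2" by (simp add: card_insert_if)
    then have "card (N - {a, d}) \<noteq> 0"
      using \<open>\<not> card N \<le> 3\<close> diff_card_le_card_Diff[of "{a, d}" N] by simp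
    then obtain b where b: "b \<in> N" "b \<noteq> a" "b \<noteq> d" by (metis DiffE card.empty ex_in_conv insertCI)
    then have "a \<in> N" "d \<in> N" "a < b" "b < d"
      using \<open>finite N\<close> unfolding a_def d_def
      by (auto intro: Min_in Max_in order.not_eq_order_implies_strict)
    moreover have "d < n" using \<open>d \<in> N\<close> by (simp add: N_def)
    ultimately have "n \<le> 3" using gap[of a b] gap[of b d] b by linarith
    moreover have "card N \<le> n" using card_mono[of "{..<n}" N] by (auto simp: N_def)
    ultimately show False using \<open>\<not> card N \<le> 3\<close> by linarith
  qed
  moreover have "{y \<in> set c. {w, y} \<in> E} \<subseteq> (!) c ` N"
    by (auto simp: N_def n_def in_set_conv_nth)
  then have "card {y \<in> set c. {w, y} \<in> E} \<le> card N"
    using \<open>finite N\<close> by (meson card_image_le card_mono finite_imageI order_trans)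
  ultimately show ?thesis by linarith
qed

lemma exists_induced_cycle_few_neighbours:
  assumes E: "doubleton_edges E" and U: "finite U" "U \<subseteq> V"
    and cyc: "is_cycle E c0" "set c0 \<subseteq> U"
  shows "\<exists>c. induced_cycle V E c \<and> set c \<subseteq> U \<and>
             (\<forall>w\<in>U - set c. card {y \<in> set c. {w, y} \<in> E} \<le> 3)"
proof -
  obtain c where c: "is_cycle E c \<and> set c \<subseteq> U"
    and shortest: "\<And>c'. is_cycle E c' \<and> set c' \<subseteq> U \<Longrightarrow> length c \<le> length c'"
    using ex_has_least_nat[of "\<lambda>c. is_cycle E c \<and> set c \<subseteq> U" c0 length] cyc by metis
  then have "induced_cycle V E c"
    using E U shortest_cycle_chordless[of E c U] by (blast intro: induced_cycleI)
  then show ?thesis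
    using c shortest shortest_cycle_few_neighbours[of E c U] by blast
qed

lemma card_edges_in_Diff_le:
  assumes E: "doubleton_edges E" and W: "finite W" "S \<subseteq> W"
    and few: "\<And>w. w \<in> W - S \<Longrightarrow> card {y \<in> S. {w, y} \<in> E} \<le> d"
  shows "card (edges_in E W) \<le> card (edges_in E (W - S)) + card (edges_in E S) + d * card (W - S)"
proof -
  define X where "X w = (\<lambda>y. {w, y}) ` {y \<in> S. {w, y} \<in> E}" for w
  have "edges_in E W \<subseteq> edges_in E (W - S) \<union> edges_in E S \<union> (\<Union>w\<in>W - S. X w)"
  proof
    fix e assume e: "e \<in> edges_in E W"
    then obtain u v where uv: "e = {u, v}" using doubleton_edgesE[OF E] by blast
    have cross: "e \<in> X w" if "w \<in> W - S" "y \<in> S" "e = {w, y}" for w y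
      using that e unfolding X_def by blast
    show "e \<in> edges_in E (W - S) \<union> edges_in E S \<union> (\<Union>w\<in>W - S. X w)"
    proof (cases "u \<in> S \<longleftrightarrow> v \<in> S")
      case True
      then show ?thesis using e uv by auto
    next
      case False
      then show ?thesis using e uv cross[of u v] cross[of v u] by (auto simp: insert_commute)
    qed
  qed
  moreover have "finite S" "finite (W - S)" using W finite_subset by auto
  then have fin: "finite (edges_in E (W - S))" "finite (edges_in E S)" "\<And>w. finite (X w)"
    by (simp_all add: finite_edges_in X_def)
  ultimately have "card (edges_in E W) \<le>
      card (edges_in E (W - S) \<union> edges_in E S \<union> (\<Union>w\<in>W - S. X w))"
    using fin \<open>finite (W - S)\<close> by (intro card_mono) auto
  also have "\<dots> \<le> card (edges_in E (W - S)) + card (edges_in E S) + card (\<Union>w\<in>W - S. X w)"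
    by (meson add_right_mono card_Un_le order_trans)
  finally have "card (edges_in E W) \<le>
      card (edges_in E (W - S)) + card (edges_in E S) + card (\<Union>w\<in>W - S. X w)" .
  moreover have "card (\<Union>w\<in>W - S. X w) \<le> (\<Sum>w\<in>W - S. card (X w))"
    using \<open>finite (W - S)\<close> by (rule card_UN_le)
  moreover have "(\<Sum>w\<in>W - S. card (X w)) \<le> d * card (W - S)"
  proof -
    have "card (X w) \<le> d" if "w \<in> W - S" for w
      using few[OF that] card_image_le[of "{y \<in> S. {w, y} \<in> E}" "\<lambda>y. {w, y}"] \<open>finite S\<close>
      unfolding X_def by simp
    then show ?thesis
      using sum_bounded_above[of "W - S" "\<lambda>w. card (X w)" d] by (simp add: mult.commute)
  qed
  ultimately show ?thesis by linarith
qed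

lemma edges_in_singleton:
  assumes "doubleton_edges E"
  shows "edges_in E {x} = {}"
proof -
  have "e \<notin> E" if "e \<subseteq> {x}" for e
  proof
    assume "e \<in> E"
    then obtain u v where "u \<noteq> v" "e = {u, v}" using doubleton_edgesE[OF assms] by blast
    with that show False by blast
  qed
  then show ?thesis by blast
qed

lemma dense_has_min_degree_2_subset:
  assumes E: "doubleton_edges E"
  shows "finite W \<Longrightarrow> W \<noteq> {} \<Longrightarrow> card W \<le> card (edges_in E W) \<Longrightarrow>
    \<exists>T\<subseteq>W. T \<noteq> {} \<and> min_degree_2_on E T"
proof (induction "card W" arbitrary: W rule: less_induct)
  case less
  show ?case
  proof (cases "min_degree_2_on E W")
    case True
    then show ?thesis using less.prems by blast
  next
    case False
    then obtain x where x: "x \<in> W"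
      and "\<not> (\<exists>y\<in>W. \<exists>z\<in>W. y \<noteq> z \<and> {x, y} \<in> E \<and> {x, z} \<in> E)"
      unfolding min_degree_2_on_def by blast
    then have "\<forall>y\<in>{y \<in> W - {x}. {x, y} \<in> E}. \<forall>z\<in>{y \<in> W - {x}. {x, y} \<in> E}. y = z"
      by blast
    then have "card {y \<in> W - {x}. {x, y} \<in> E} \<le> 1"
      using card_le_Suc0_iff_eq[of "{y \<in> W - {x}. {x, y} \<in> E}"] less.prems(1) by simp
    moreover have "W - (W - {x}) = {x}" using x by blast
    ultimately have "card (edges_in E W) \<le>
        card (edges_in E {x}) + card (edges_in E (W - {x})) + 1 * card {x}"
      using card_edges_in_Diff_le[OF E less.prems(1), of "W - {x}" 1] by simp
    then have "card (edges_in E W) \<le> card (edges_in E (W - {x})) + 1"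
      by (simp add: edges_in_singleton[OF E])
    then have "card (W - {x}) \<le> card (edges_in E (W - {x}))"
      using x less.prems(1,3) by simp
    moreover have "card (W - {x}) < card W" using less.prems(1) x by (rule card_Diff1_less)
    moreover have "W - {x} \<noteq> {}"
    proof
      assume "W - {x} = {}"
      then have "W = {x}" using x by blast
      then show False using less.prems(3) edges_in_singleton[OF E] by simp
    qed
    ultimately obtain T where "T \<subseteq> W - {x}" "T \<noteq> {}" "min_degree_2_on E T"
      using less.hyps[of "W - {x}"] less.prems(1) by blast
    then show ?thesis by blast
  qed
qed

lemma exists_induced_cycle_leaving_dense:
  assumes E: "doubleton_edges E" and W: "finite W" "W \<subseteq> V" "W \<noteq> {}"
    and dense: "3 * Suc k * card W \<le> card (edges_in E W)"
  shows "\<exists>c. induced_cycle V E c \<and> set c \<subseteq> W \<and> 3 * k * card W \<le> card (edges_in E (W - set c))"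
proof -
  have "card W \<le> 3 * Suc k * card W" by simp
  then have "card W \<le> card (edges_in E W)" using dense by (rule le_trans)
  then obtain T where "T \<subseteq> W" "T \<noteq> {}" "min_degree_2_on E T"
    using dense_has_min_degree_2_subset[OF E W(1,3)] by blast
  moreover have "finite T" using \<open>T \<subseteq> W\<close> W(1) finite_subset by blast
  ultimately obtain c0 where "is_cycle E c0" "set c0 \<subseteq> W"
    using min_degree_2_has_cycle[OF E, of T] by blast
  then obtain c where c: "induced_cycle V E c" "set c \<subseteq> W"
    and few: "\<forall>w\<in>W - set c. card {y \<in> set c. {w, y} \<in> E} \<le> 3"
    using exists_induced_cycle_few_neighbours[OF E W(1,2)] by blast
  have "card (edges_in E W) \<le> card (edges_in E (W - set c)) + card (set c) + 3 * card (W - set c)"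
    using card_edges_in_Diff_le[OF E W(1) c(2), of 3] few card_edges_in_induced_cycle[OF c(1)]
    by simp
  moreover have "card W = card (set c) + card (W - set c)"
    using c(2) W(1) by (simp add: card_Diff_subset card_mono)
  ultimately have "3 * k * card W \<le> card (edges_in E (W - set c))"
    using dense by (simp add: algebra_simps)
  then show ?thesis using c by blast
qed

definition induced_cycles_within :: "nat \<Rightarrow> 'a set \<Rightarrow> 'a set set \<Rightarrow> 'a set \<Rightarrow> bool" where
  "induced_cycles_within k V E A \<longleftrightarrow>
     (\<exists>C :: nat \<Rightarrow> 'a list.
        (\<forall>i<k. induced_cycle V E (C i) \<and> set (C i) \<subseteq> A) \<and>
        (\<forall>i<k. \<forall>j<k. i \<noteq> j \<longrightarrow>
            set (C i) \<inter> set (C j) = {} \<and> (\<forall>u\<in>set (C i). \<forall>v\<in>set (C j). {u, v} \<notin> E)))"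

lemma induced_cycles_within_0: "induced_cycles_within 0 V E A"
  by (simp add: induced_cycles_within_def)

lemma induced_cycles_within_mono:
  "induced_cycles_within k V E A \<Longrightarrow> A \<subseteq> B \<Longrightarrow> induced_cycles_within k V E B"
  unfolding induced_cycles_within_def by blast

lemma has_induced_k_cycles_if_within:
  "induced_cycles_within k V E A \<Longrightarrow> has_induced_k_cycles k V E"
  unfolding induced_cycles_within_def has_induced_k_cycles_def by blast

lemma induced_cycles_within_Suc:
  assumes C: "induced_cycles_within k V E A" and c: "induced_cycle V E c" "set c \<subseteq> B"
    and AB: "A \<inter> B = {}" "\<forall>u\<in>A. \<forall>v\<in>B. {u, v} \<notin> E"
  shows "induced_cycles_within (Suc k) V E (A \<union> B)"
proof -
  obtain C where C: "\<forall>i<k. induced_cycle V E (C i) \<and> set (C i) \<subseteq> A"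
    "\<forall>i<k. \<forall>j<k. i \<noteq> j \<longrightarrow>
       set (C i) \<inter> set (C j) = {} \<and> (\<forall>u\<in>set (C i). \<forall>v\<in>set (C j). {u, v} \<notin> E)"
    using C unfolding induced_cycles_within_def by blast
  have sep: "set (C i) \<inter> set c = {}" "set c \<inter> set (C i) = {}"
    "\<forall>u\<in>set (C i). \<forall>v\<in>set c. {u, v} \<notin> E" "\<forall>u\<in>set c. \<forall>v\<in>set (C i). {u, v} \<notin> E"
    if "i < k" for i
    using C(1) that c(2) AB by (fastforce simp: insert_commute)+
  show ?thesis
    unfolding induced_cycles_within_def
    by (rule exI[of _ "C(k := c)"]) (use C c sep in \<open>auto simp: less_Suc_eq\<close>)
qed

lemma in_interior_iff: "x \<in> interior p \<longleftrightarrow> (\<exists>i. 0 < i \<and> Suc i < length p \<and> x = p ! i)"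
proof
  assume "x \<in> interior p"
  then obtain j where "j < length (butlast (tl p))" "x = butlast (tl p) ! j"
    unfolding interior_def by (metis in_set_conv_nth)
  then show "\<exists>i. 0 < i \<and> Suc i < length p \<and> x = p ! i"
    by (intro exI[of _ "Suc j"]) (simp add: nth_butlast nth_tl)
next
  assume "\<exists>i. 0 < i \<and> Suc i < length p \<and> x = p ! i"
  then obtain j where "Suc (Suc j) < length p" "x = p ! Suc j" by (metis gr0_implies_Suc)
  then have "j < length (butlast (tl p))" "x = butlast (tl p) ! j"
    by (simp_all add: nth_butlast nth_tl)
  then show "x \<in> interior p" unfolding interior_def by simp
qed

lemma set_eq_hd_last_interior:
  assumes "2 \<le> length p"
  shows "set p = {hd p, last p} \<union> interior p"
proof -
  obtain a q where p: "p = a # q" using assms by (cases p) auto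
  then have "q \<noteq> []" using assms by auto
  then have "set q = set (butlast q @ [last q])" by simp
  then have "set q = insert (last q) (set (butlast q))" by simp
  then show ?thesis using p \<open>q \<noteq> []\<close> by (auto simp: interior_def)
qed

lemma path_edge_meets_interior:
  assumes "3 \<le> length p" "Suc i < length p"
  shows "p ! i \<in> interior p \<or> p ! Suc i \<in> interior p"
  using assms by (cases i) (auto simp: in_interior_iff)

locale subdivision =
  fixes VH :: "'b set" and EH :: "'b set set" and VG :: "'a set" and EG :: "'a set set"
    and f :: "'b \<Rightarrow> 'a" and P :: "'b set \<Rightarrow> 'a list"
  assumes simple: "simple_graph VH EH"
    and inj: "inj_on f VH"
    and path: "\<And>e. e \<in> EH \<Longrightarrow> distinct (P e) \<and> 3 \<le> length (P e) \<and>
                  {hd (P e), last (P e)} = f ` e \<and> interior (P e) \<inter> f ` VH = {}"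
    and interiors_disjoint:
      "\<And>e e'. e \<in> EH \<Longrightarrow> e' \<in> EH \<Longrightarrow> e \<noteq> e' \<Longrightarrow> interior (P e) \<inter> interior (P e') = {}"
    and vertices: "VG = f ` VH \<union> (\<Union>e\<in>EH. interior (P e))"
    and edges: "EG = (\<Union>e\<in>EH. path_edges (P e))"

lemma strict_subdivision_imp_subdivision:
  assumes "simple_graph VH EH" "strict_subdivision VG EG VH EH"
  shows "\<exists>f P. subdivision VH EH VG EG f P"
proof -
  obtain f P where "inj_on f VH"
    "\<forall>e\<in>EH. distinct (P e) \<and> 3 \<le> length (P e) \<and>
        {hd (P e), last (P e)} = f ` e \<and> interior (P e) \<inter> f ` VH = {}"
    "\<forall>e\<in>EH. \<forall>e'\<in>EH. e \<noteq> e' \<longrightarrow> interior (P e) \<inter> interior (P e') = {}"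
    "VG = f ` VH \<union> (\<Union>e\<in>EH. interior (P e))" "EG = (\<Union>e\<in>EH. path_edges (P e))"
    using assms(2) unfolding strict_subdivision_def by (elim exE conjE) blast
  then have "subdivision VH EH VG EG f P" using assms(1) by unfold_locales blast+
  then show ?thesis by blast
qed

context subdivision
begin

definition region :: "'b set \<Rightarrow> 'a set" where
  "region W = f ` W \<union> (\<Union>e\<in>edges_in EH W. interior (P e))"

lemma finite_VH: "finite VH"
  using simple by (simp add: simple_graph_def)

lemma EH_memD: "e \<in> EH \<Longrightarrow> \<exists>u v. u \<noteq> v \<and> e = {u, v} \<and> u \<in> VH \<and> v \<in> VH"
  using simple by (simp add: simple_graph_def)

lemma doubleton_edges_EH: "doubleton_edges EH"
  unfolding doubleton_edges_def using EH_memD by meson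

lemma edge_subset_VH: "e \<in> EH \<Longrightarrow> e \<subseteq> VH"
  using EH_memD by blast

lemma edge_nonempty: "e \<in> EH \<Longrightarrow> e \<noteq> {}"
  using doubleton_edgesE[OF doubleton_edges_EH] by blast

lemma set_P: "e \<in> EH \<Longrightarrow> set (P e) = f ` e \<union> interior (P e)"
  using set_eq_hd_last_interior[of "P e"] path[of e] by simp

lemma path_edge_in_EG: "e \<in> EH \<Longrightarrow> Suc i < length (P e) \<Longrightarrow> {P e ! i, P e ! Suc i} \<in> EG"
  unfolding edges path_edges_def by blast

lemma doubleton_edges_EG: "doubleton_edges EG"
  unfolding doubleton_edges_def
proof
  fix e assume "e \<in> EG"
  then obtain e' i where e': "e' \<in> EH" "Suc i < length (P e')" "e = {P e' ! i, P e' ! Suc i}"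
    unfolding edges path_edges_def by blast
  then have "P e' ! i \<noteq> P e' ! Suc i" using path[OF e'(1)] by (simp add: nth_eq_iff_index_eq)
  then show "\<exists>u v. u \<noteq> v \<and> e = {u, v}" using e'(3) by blast
qed

lemma region_mono: "A \<subseteq> B \<Longrightarrow> region A \<subseteq> region B"
  unfolding region_def by blast

lemma region_subset_VG: "W \<subseteq> VH \<Longrightarrow> region W \<subseteq> VG"
  unfolding region_def vertices by blast

lemma finite_region: "W \<subseteq> VH \<Longrightarrow> finite (region W)"
  using finite_VH finite_subset[of W VH] finite_edges_in[of W EH]
  unfolding region_def interior_def by auto

lemma set_P_subset_region: "e \<in> EH \<Longrightarrow> e \<subseteq> W \<Longrightarrow> set (P e) \<subseteq> region W"
  using set_P[of e] unfolding region_def by blast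

lemma interior_in_region_imp_subset:
  assumes "e \<in> EH" "x \<in> interior (P e)" "x \<in> region A" "A \<subseteq> VH"
  shows "e \<subseteq> A"
proof -
  have "x \<notin> f ` A" using path[OF assms(1)] assms(2,4) by blast
  then obtain e' where "e' \<in> EH" "e' \<subseteq> A" "x \<in> interior (P e')"
    using assms(3) unfolding region_def by blast
  then show ?thesis using interiors_disjoint[of e e'] assms(1,2) by blast
qed

lemma region_disjoint:
  assumes A: "A \<subseteq> VH" and B: "B \<subseteq> VH" and AB: "A \<inter> B = {}"
  shows "region A \<inter> region B = {}"
proof -
  have False if xA: "x \<in> region A" and xB: "x \<in> region B" for x
  proof (cases "x \<in> f ` VH")
    case True
    then have "x \<notin> interior (P e)" if "e \<in> EH" for e using path[OF that] by blast
    then obtain a b where "a \<in> A" "b \<in> B" "x = f a" "x = f b"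
      using xA xB unfolding region_def by blast
    then show False using inj_onD[OF inj] A B AB by blast
  next
    case False
    then have "x \<notin> f ` A" using A by blast
    then obtain e where e: "e \<in> EH" "e \<subseteq> A" "x \<in> interior (P e)"
      using xA unfolding region_def by blast
    have "e \<subseteq> B" using interior_in_region_imp_subset[OF e(1,3) xB B] .
    then show False using e edge_nonempty AB by blast
  qed
  then show ?thesis by blast
qed

lemma region_nonadjacent:
  assumes A: "A \<subseteq> VH" and B: "B \<subseteq> VH" and AB: "A \<inter> B = {}"
    and u: "u \<in> region A" and v: "v \<in> region B"
  shows "{u, v} \<notin> EG"
proof
  assume "{u, v} \<in> EG"
  then obtain e i where e: "e \<in> EH" "Suc i < length (P e)" "{u, v} = {P e ! i, P e ! Suc i}"
    unfolding edges path_edges_def by blast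
  then have "{u, v} \<subseteq> set (P e)" by simp
  then have uv: "u \<in> set (P e)" "v \<in> set (P e)" by simp_all
  have "u \<in> interior (P e) \<or> v \<in> interior (P e)"
    using path_edge_meets_interior[OF _ e(2)] path[OF e(1)] e(3) by (auto simp: doubleton_eq_iff)
  then have "set (P e) \<subseteq> region A \<or> set (P e) \<subseteq> region B"
    using interior_in_region_imp_subset[OF e(1) _ u A] interior_in_region_imp_subset[OF e(1) _ v B]
      set_P_subset_region[OF e(1)] by blast
  then show False using uv u v region_disjoint[OF A B AB] by blast
qed

lemma branch_vertex_has_interior_neighbour:
  assumes e: "e \<in> EH" and x: "x \<in> e"
  shows "\<exists>y\<in>interior (P e). {f x, y} \<in> EG"
proof -
  define p where "p = P e"
  define n where "n = length p"
  have "3 \<le> n" "p \<noteq> []" using path[OF e] by (auto simp: p_def n_def)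
  moreover have "f x = p ! 0 \<or> f x = p ! (n - 1)"
    using path[OF e] x \<open>p \<noteq> []\<close> by (auto simp: p_def n_def hd_conv_nth last_conv_nth)
  moreover have "n - 1 = Suc (n - 2)" using \<open>3 \<le> n\<close> by simp
  ultimately consider "f x = p ! 0" | "f x = p ! Suc (n - 2)" by force
  then show ?thesis
  proof cases
    case 1
    have "p ! 1 \<in> interior p" using \<open>3 \<le> n\<close> by (auto simp: in_interior_iff n_def)
    moreover have "{f x, p ! 1} \<in> EG"
      using path_edge_in_EG[OF e, of 0] 1 \<open>3 \<le> n\<close> by (simp add: p_def n_def)
    ultimately show ?thesis by (auto simp: p_def)
  next
    case 2
    have "p ! (n - 2) \<in> interior p"
      unfolding in_interior_iff using \<open>3 \<le> n\<close> by (intro exI[of _ "n - 2"]) (simp add: n_def)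
    moreover have "{f x, p ! (n - 2)} \<in> EG"
      using path_edge_in_EG[OF e, of "n - 2"] 2 \<open>3 \<le> n\<close>
      by (simp add: p_def n_def insert_commute)
    ultimately show ?thesis by (auto simp: p_def)
  qed
qed

lemma min_degree_2_region:
  assumes S: "S \<subseteq> VH" "min_degree_2_on EH S"
  shows "min_degree_2_on EG (region S)"
  unfolding min_degree_2_on_def
proof
  fix x assume x: "x \<in> region S"
  show "\<exists>y\<in>region S. \<exists>z\<in>region S. y \<noteq> z \<and> {x, y} \<in> EG \<and> {x, z} \<in> EG"
  proof (cases "x \<in> f ` S")
    case True
    then obtain s where s: "s \<in> S" "x = f s" by blast
    then obtain y z where yz: "y \<in> S" "z \<in> S" "y \<noteq> z" "{s, y} \<in> EH" "{s, z} \<in> EH"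
      using S(2) unfolding min_degree_2_on_def by blast
    obtain n1 where n1: "n1 \<in> interior (P {s, y})" "{x, n1} \<in> EG"
      using branch_vertex_has_interior_neighbour[OF yz(4)] s by blast
    obtain n2 where n2: "n2 \<in> interior (P {s, z})" "{x, n2} \<in> EG"
      using branch_vertex_has_interior_neighbour[OF yz(5)] s by blast
    have "{s, y} \<noteq> {s, z}" using yz(3) by (auto simp: doubleton_eq_iff)
    then have "n1 \<noteq> n2" using interiors_disjoint[OF yz(4,5)] n1 n2 by blast
    moreover have "n1 \<in> region S" "n2 \<in> region S"
      using n1 n2 yz s set_P[OF yz(4)] set_P[OF yz(5)] set_P_subset_region by blast+
    ultimately show ?thesis using n1 n2 by blast
  next
    case False
    then obtain e where e: "e \<in> EH" "e \<subseteq> S" "x \<in> interior (P e)"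
      using x unfolding region_def by blast
    then obtain i where i: "0 < i" "Suc i < length (P e)" "x = P e ! i"
      by (auto simp: in_interior_iff)
    have "P e ! (i - 1) \<noteq> P e ! Suc i" using path[OF e(1)] i by (simp add: nth_eq_iff_index_eq)
    moreover have "P e ! (i - 1) \<in> region S" "P e ! Suc i \<in> region S"
      using set_P_subset_region[OF e(1,2)] i by auto
    moreover have "{x, P e ! (i - 1)} \<in> EG" "{x, P e ! Suc i} \<in> EG"
      using path_edge_in_EG[OF e(1), of "i - 1"] path_edge_in_EG[OF e(1), of i] i
      by (simp_all add: insert_commute)
    ultimately show ?thesis by blast
  qed
qed

lemma induced_cycle_in_region:
  assumes S: "S \<subseteq> VH" and c: "induced_cycle VH EH c" "set c \<subseteq> S"
  shows "\<exists>c'. induced_cycle VG EG c' \<and> set c' \<subseteq> region S"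
proof -
  have "min_degree_2_on EH (set c)"
    using is_cycle_min_degree_2 induced_cycle_is_cycle c(1) by blast
  then have "min_degree_2_on EG (region (set c))" using c S by (intro min_degree_2_region) auto
  moreover have "region (set c) \<noteq> {}" using c(1) by (auto simp: region_def induced_cycle_def)
  moreover have "set c \<subseteq> VH" using c S by blast
  ultimately obtain c0 where "is_cycle EG c0" "set c0 \<subseteq> region (set c)"
    using min_degree_2_has_cycle[OF doubleton_edges_EG finite_region] by blast
  then obtain c' where "induced_cycle VG EG c'" "set c' \<subseteq> region (set c)"
    using exists_induced_cycle_few_neighbours[OF doubleton_edges_EG finite_region region_subset_VG]
      \<open>set c \<subseteq> VH\<close> by blast
  then show ?thesis using region_mono[OF c(2)] by blast
qed

lemma induced_cycles_within_region:
  assumes "W \<subseteq> VH" "W \<noteq> {}" "3 * k * card W \<le> card (edges_in EH W)"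
  shows "induced_cycles_within k VG EG (region W)"
  using assms
proof (induction k arbitrary: W)
  case 0
  show ?case by (rule induced_cycles_within_0)
next
  case (Suc k)
  have "finite W" using Suc.prems(1) finite_VH finite_subset by blast
  then obtain c where c: "induced_cycle VH EH c" "set c \<subseteq> W"
    and dense: "3 * k * card W \<le> card (edges_in EH (W - set c))"
    using exists_induced_cycle_leaving_dense[OF doubleton_edges_EH _ Suc.prems(1,2,3)] by blast
  define S where "S = set c"
  have parts: "W - S \<subseteq> VH" "S \<subseteq> VH" "(W - S) \<inter> S = {}"
    using c(2) Suc.prems(1) by (auto simp: S_def)
  have rest: "induced_cycles_within k VG EG (region (W - S))"
  proof (cases "k = 0")
    case True
    then show ?thesis by (simp add: induced_cycles_within_0)
  next
    case False
    then have "0 < 3 * k * card W" using Suc.prems(2) \<open>finite W\<close> by (simp add: card_gt_0_iff)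
    then have "card (edges_in EH (W - S)) \<noteq> 0" using dense unfolding S_def by linarith
    then have "edges_in EH (W - S) \<noteq> {}" by force
    then have "W - S \<noteq> {}" using edge_nonempty by blast
    moreover have "3 * k * card (W - S) \<le> 3 * k * card W" using \<open>finite W\<close> by (simp add: card_mono)
    then have "3 * k * card (W - S) \<le> card (edges_in EH (W - S))"
      using dense unfolding S_def by (rule le_trans)
    ultimately show ?thesis using Suc.IH[of "W - S"] parts(1) by blast
  qed
  obtain c' where c': "induced_cycle VG EG c'" "set c' \<subseteq> region S"
    using induced_cycle_in_region[OF parts(2) c(1)] unfolding S_def by blast
  have "\<forall>u\<in>region (W - S). \<forall>v\<in>region S. {u, v} \<notin> EG"
    using region_nonadjacent[OF parts] by blast
  then have "induced_cycles_within (Suc k) VG EG (region (W - S) \<union> region S)"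
    by (rule induced_cycles_within_Suc[OF rest c' region_disjoint[OF parts]])
  moreover have "region (W - S) \<union> region S \<subseteq> region W"
    using region_mono[of "W - S" W] region_mono[of S W] c(2) by (auto simp: S_def)
  ultimately show ?case by (rule induced_cycles_within_mono)
qed

end

lemma strict_subdivision_not_O_free:
  assumes "simple_graph VH EH" "strict_subdivision VG EG VH EH" "6 * real k \<le> avg_degree VH EH"
  shows "\<not> O_free k VG EG"
proof (cases "k = 0")
  case True
  then show ?thesis by (simp add: O_free_def has_induced_k_cycles_def)
next
  case False
  obtain f P where "subdivision VH EH VG EG f P"
    using strict_subdivision_imp_subdivision[OF assms(1,2)] by blast
  then interpret subdivision VH EH VG EG f P .
  have "card VH \<noteq> 0"
  proof
    assume "card VH = 0"
    then have "avg_degree VH EH = 0" by (simp add: avg_degree_def)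
    then show False using assms(3) False by simp
  qed
  then have "real (3 * k * card VH) \<le> real (card EH)"
    using assms(3) by (simp add: avg_degree_def le_divide_eq)
  moreover have "edges_in EH VH = EH" using edge_subset_VH by blast
  ultimately have "3 * k * card VH \<le> card (edges_in EH VH)" by (simp only: of_nat_le_iff)
  moreover have "VH \<noteq> {}" using \<open>card VH \<noteq> 0\<close> by auto
  ultimately have "induced_cycles_within k VG EG (region VH)"
    by (intro induced_cycles_within_region) simp_all
  then show ?thesis by (simp add: O_free_def has_induced_k_cycles_if_within)
qed

theorem mainTheorem12:
  shows "\<exists>c::real > 0. \<forall>k::nat. k \<ge> 2 \<longrightarrow>
    (\<forall>(VH :: nat set) EH (VG :: nat set) EG.
       simple_graph VH EH \<longrightarrow>
       avg_degree VH EH \<ge> c * real k * ln (real k) \<longrightarrow>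
       strict_subdivision VG EG VH EH \<longrightarrow>
       \<not> O_free k VG EG)"
proof (intro exI[of _ "6 / ln 2"] conjI allI impI)
  show "(0::real) < 6 / ln 2" by simp
  fix k :: nat and VH :: "nat set" and EH and VG :: "nat set" and EG
  assume k: "2 \<le> k" and H: "simple_graph VH EH" and G: "strict_subdivision VG EG VH EH"
    and avg: "6 / ln 2 * real k * ln (real k) \<le> avg_degree VH EH"
  have "6 * real k = 6 / ln 2 * real k * ln 2" by simp
  also have "\<dots> \<le> 6 / ln 2 * real k * ln (real k)" using k by (intro mult_left_mono) auto
  finally show "\<not> O_free k VG EG"
    by (intro strict_subdivision_not_O_free[OF H G]) (use avg in linarith)
qed

end
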